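(* Let $0<\mu<L_{\max}^{-1}$ with $L_{\max}=\max_i\|A_i\|_2^2$, let $\{x^n\}$ be generated by GAITA (as in the context) from an arbitrary $x^0\in\mathbf{R}^N$, and let $\mathcal{L}$ be the set of limit points of $\{x^n\}$. Then $\mathcal{L}\subseteq\mathcal{F}_q$.
   Context: Let $A\in\mathbf{R}^{m\times N}$ have columns $A_1,\dots,A_N$, $y\in\mathbf{R}^m$, $\lambda>0$, $q\in(0,1)$, and $T_\lambda(x)=\frac12\|Ax-y\|_2^2+\lambda\sum_{i=1}^N|x_i|^q$. For a step size $\mu>0$ set $\tau_{\mu,q}=\frac{2-q}{2-2q}(2\lambda\mu(1-q))^{\frac{1}{2-q}}$ and $\eta_{\mu,q}=(2\lambda\mu(1-q))^{\frac{1}{2-q}}$. For $z\in\mathbf{R}$ let $prox_{\mu,\lambda|\cdot|^q}(z)=\arg\min_{v\in\mathbf{R}}\{\frac{(z-v)^2}{2\mu}+\lambda|v|^q\}$ (a set; a single point when $|z|\neq\tau_{\mu,q}$). Define $\mathcal{T}(z,w)$ as the unique element of $prox_{\mu,\lambda|\cdot|^q}(z)$ if $|z|\neq\tau_{\mu,q}$, and, if $|z|=\tau_{\mu,q}$, as $sgn(z)\eta_{\mu,q}$ when $w\neq0$ and $0$ when $w=0$ ($sgn(0)=0$). GAITA: given $x^0\in\mathbf{R}^N$, for $n=0,1,2,\dots$ let $i=(n\bmod N)+1$, $z_i^n=x_i^n-\mu A_i^T(Ax^n-y)$, $x_i^{n+1}=\mathcal{T}(z_i^n,x_i^n)$, $x_j^{n+1}=x_j^n$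 for $j\neq i$. The fixed point set is $\mathcal{F}_q=\{x\in\mathbf{R}^N: x_i\in prox_{\mu,\lambda|\cdot|^q}(x_i-\mu A_i^T(Ax-y))\text{ for all }i=1,\dots,N\}$, i.e. the fixed points of the thresholding map $x\mapsto Prox_{\mu,\lambda\|\cdot\|_q^q}(x-\mu A^T(Ax-y))$ applied componentwise. *)

theory Defs
  imports "HOL-Analysis.Analysis"
begin

text \<open>Indices are 0-based: rows 0..m-1, columns 0..N-1. A matrix is A i j (row i, column j).
  Vectors are functions nat => real, only components below the dimension matter.\<close>

definition resid :: "nat \<Rightarrow> nat \<Rightarrow> (nat \<Rightarrow> nat \<Rightarrow> real) \<Rightarrow> (nat \<Rightarrow> real) \<Rightarrow> (nat \<Rightarrow> real) \<Rightarrow> nat \<Rightarrow> real" where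
  "resid m N A y x k = (\<Sum>j<N. A k j * x j) - y k"

definition grad_i :: "nat \<Rightarrow> nat \<Rightarrow> (nat \<Rightarrow> nat \<Rightarrow> real) \<Rightarrow> (nat \<Rightarrow> real) \<Rightarrow> (nat \<Rightarrow> real) \<Rightarrow> nat \<Rightarrow> real" where
  "grad_i m N A y x i = (\<Sum>k<m. A k i * resid m N A y x k)"

definition col_norm2 :: "nat \<Rightarrow> (nat \<Rightarrow> nat \<Rightarrow> real) \<Rightarrow> nat \<Rightarrow> real" where
  "col_norm2 m A i = (\<Sum>k<m. (A k i)^2)"

definition Lmax :: "nat \<Rightarrow> nat \<Rightarrow> (nat \<Rightarrow> nat \<Rightarrow> real) \<Rightarrow> real" where
  "Lmax m N A = Max ((\<lambda>i. col_norm2 m A i) ` {..<N})"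

definition prox_q :: "real \<Rightarrow> real \<Rightarrow> real \<Rightarrow> real \<Rightarrow> real set" where
  "prox_q \<mu> lam q z = {v. \<forall>u. (z - v)^2 / (2*\<mu>) + lam * \<bar>v\<bar> powr q \<le> (z - u)^2 / (2*\<mu>) + lam * \<bar>u\<bar> powr q}"

definition tau_q :: "real \<Rightarrow> real \<Rightarrow> real \<Rightarrow> real" where
  "tau_q \<mu> lam q = (2 - q) / (2 - 2*q) * (2*lam*\<mu>*(1 - q)) powr (1 / (2 - q))"

definition eta_q :: "real \<Rightarrow> real \<Rightarrow> real \<Rightarrow> real" where
  "eta_q \<mu> lam q = (2*lam*\<mu>*(1 - q)) powr (1 / (2 - q))"

definition Tmap :: "real \<Rightarrow> real \<Rightarrow> real \<Rightarrow> real \<Rightarrow> real \<Rightarrow> real" where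
  "Tmap \<mu> lam q z w =
     (if \<bar>z\<bar> \<noteq> tau_q \<mu> lam q then (THE v. v \<in> prox_q \<mu> lam q z)
      else if w \<noteq> 0 then sgn z * eta_q \<mu> lam q else 0)"

definition gaita_step :: "nat \<Rightarrow> nat \<Rightarrow> (nat \<Rightarrow> nat \<Rightarrow> real) \<Rightarrow> (nat \<Rightarrow> real) \<Rightarrow> real \<Rightarrow> real \<Rightarrow> real \<Rightarrow> nat \<Rightarrow> (nat \<Rightarrow> real) \<Rightarrow> (nat \<Rightarrow> real)" where
  "gaita_step m N A y lam q \<mu> n x =
     (let i = n mod N; z = x i - \<mu> * grad_i m N A y x i in x(i := Tmap \<mu> lam q z (x i)))"

primrec gaita :: "nat \<Rightarrow> nat \<Rightarrow> (nat \<Rightarrow> nat \<Rightarrow> real) \<Rightarrow> (nat \<Rightarrow> real) \<Rightarrow> real \<Rightarrow> real \<Rightarrow> real \<Rightarrow> (nat \<Rightarrow> real) \<Rightarrow> nat \<Rightarrow> (nat \<Rightarrow> real)" where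
  "gaita m N A y lam q \<mu> x0 0 = x0"
| "gaita m N A y lam q \<mu> x0 (Suc n) = gaita_step m N A y lam q \<mu> n (gaita m N A y lam q \<mu> x0 n)"

definition fixed_set :: "nat \<Rightarrow> nat \<Rightarrow> (nat \<Rightarrow> nat \<Rightarrow> real) \<Rightarrow> (nat \<Rightarrow> real) \<Rightarrow> real \<Rightarrow> real \<Rightarrow> real \<Rightarrow> (nat \<Rightarrow> real) set" where
  "fixed_set m N A y lam q \<mu> = {x. \<forall>i<N. x i \<in> prox_q \<mu> lam q (x i - \<mu> * grad_i m N A y x i)}"

text \<open>Limit points of a sequence of vectors in R^N (components 0..N-1), with the
  limit vector zero outside the index range.\<close>
definition limit_points :: "nat \<Rightarrow> (nat \<Rightarrow> nat \<Rightarrow> real) \<Rightarrow> (nat \<Rightarrow> real) set" where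
  "limit_points N xs = {x. (\<forall>j\<ge>N. x j = 0) \<and>
      (\<exists>r. strict_mono r \<and> (\<forall>j<N. (\<lambda>k. xs (r k) j) \<longlonglongrightarrow> x j))}"

end

theory Submission
  imports Defs
begin

text \<open>Writing \<open>P z v\<close> for the objective of the scalar proximal problem, \<open>P z v - P z 0\<close> has
  for \<open>v > 0\<close> the sign of \<open>\<theta> v - z\<close> with \<open>\<theta> v = v/2 + \<lambda>\<mu> v\<^bsup>q-1\<^esup>\<close>, whose minimum over
  \<open>v > 0\<close> is \<open>\<tau>\<close>, attained at \<open>\<eta>\<close>. Hence for \<open>|z| < \<tau>\<close> the proximal set is \<open>{0}\<close>, for
  \<open>|z| = \<tau>\<close> it contains \<open>0\<close> and \<open>sgn z \<eta>\<close>, and for \<open>|z| > \<tau>\<close> it is a single point, so every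
  GAITA step is a proximal step. A proximal step on one coordinate decreases \<open>T\<^sub>\<lambda>\<close> by at least
  \<open>1/(2\<mu>) - L\<^sub>m\<^sub>a\<^sub>x/2\<close> times the square of its length, so the squared step lengths are
  summable and the steps vanish. Along a subsequence converging to \<open>x\<^sup>*\<close>, the next \<open>N\<close> iterates
  converge to \<open>x\<^sup>*\<close> as well and include an update of every coordinate; since the graph of the
  proximal map is closed, \<open>x\<^sup>*\<close> is a fixed point.\<close>

lemma powr_neg_exp_ge_tangent:
  fixes s r :: real
  assumes "s > 0" "r < 0"
  shows "1 + r * (s - 1) \<le> s powr r"
proof -
  have "r * (s - 1) \<le> r * ln s"
    using ln_le_minus_one[OF assms(1)] assms(2) by (simp add: mult_left_mono_neg)
  also have "1 + r * ln s \<le> exp (r * ln s)" by (rule exp_ge_add_one_self)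
  finally show ?thesis using assms(1) by (simp add: powr_def)
qed

definition prox_obj :: "real \<Rightarrow> real \<Rightarrow> real \<Rightarrow> real \<Rightarrow> real \<Rightarrow> real" where
  "prox_obj \<mu> lam q z v = (z - v)^2 / (2*\<mu>) + lam * \<bar>v\<bar> powr q"

lemma mem_prox_q_iff:
  "v \<in> prox_q \<mu> lam q z \<longleftrightarrow> (\<forall>u. prox_obj \<mu> lam q z v \<le> prox_obj \<mu> lam q z u)"
  by (simp add: prox_q_def prox_obj_def)

lemma prox_q_closed_graph:
  assumes "zs \<longlonglongrightarrow> z" "vs \<longlonglongrightarrow> v" "\<And>k. vs k \<in> prox_q \<mu> lam q (zs k)"
    and "0 < q" "\<mu> \<noteq> 0"
  shows "v \<in> prox_q \<mu> lam q z"
  unfolding mem_prox_q_iff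
proof
  fix u
  have min: "(\<lambda>k. prox_obj \<mu> lam q (zs k) (vs k)) \<longlonglongrightarrow> prox_obj \<mu> lam q z v"
    unfolding prox_obj_def using assms by (intro tendsto_intros) auto
  have other: "(\<lambda>k. prox_obj \<mu> lam q (zs k) u) \<longlonglongrightarrow> prox_obj \<mu> lam q z u"
    unfolding prox_obj_def using assms by (intro tendsto_intros) auto
  show "prox_obj \<mu> lam q z v \<le> prox_obj \<mu> lam q z u"
    by (rule tendsto_le[OF _ other min]) (use assms(3) mem_prox_q_iff in auto)
qed

locale lq_prox =
  fixes \<mu> lam q :: real
  assumes mu_pos: "0 < \<mu>" and lam_pos: "0 < lam" and q_pos: "0 < q" and q_less_1: "q < 1"
begin

abbreviation "P \<equiv> prox_obj \<mu> lam q"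
abbreviation "\<eta> \<equiv> eta_q \<mu> lam q"
abbreviation "\<tau> \<equiv> tau_q \<mu> lam q"

definition \<theta> :: "real \<Rightarrow> real" where
  "\<theta> v = v/2 + lam*\<mu> * v powr (q - 1)"

lemma eta_pos: "\<eta> > 0"
  using mu_pos lam_pos q_less_1 by (simp add: eta_q_def)

lemma tau_eq: "\<tau> = (2 - q) / (2 - 2*q) * \<eta>"
  by (simp add: tau_q_def eta_q_def)

lemma tau_pos: "\<tau> > 0"
  using eta_pos q_less_1 by (simp add: tau_eq)

lemma lam_mu_eta_powr: "lam*\<mu> * \<eta> powr (q - 1) = \<eta> / (2*(1 - q))"
proof -
  have "\<eta> powr (2 - q) = 2*lam*\<mu>*(1 - q)"
    using q_less_1 mu_pos lam_pos by (simp add: eta_q_def powr_powr)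
  moreover have "\<eta> powr (q - 1) = \<eta> powr (1 - (2 - q))" by simp
  then have "\<eta> powr (q - 1) = \<eta> / \<eta> powr (2 - q)"
    using eta_pos by (simp only: powr_diff powr_one)
  ultimately have "lam*\<mu> * \<eta> powr (q - 1) = lam*\<mu> * (\<eta> / (2*lam*\<mu>*(1 - q)))" by simp
  then show ?thesis using mu_pos lam_pos by simp
qed

lemma theta_eta: "\<theta> \<eta> = \<tau>"
proof -
  have "\<theta> \<eta> = \<eta>/2 + \<eta> / (2*(1 - q))" by (simp add: \<theta>_def lam_mu_eta_powr)
  also have "\<dots> = \<tau>" using q_less_1 by (simp add: tau_eq field_simps)
  finally show ?thesis .
qed

lemma tau_le_theta:
  assumes "v > 0" shows "\<tau> \<le> \<theta> v"
proof -
  define s where "s = v / \<eta>"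
  have s: "s > 0" and v: "v = \<eta> * s" using assms eta_pos by (simp_all add: s_def)
  have "lam*\<mu> * v powr (q - 1) = (lam*\<mu> * \<eta> powr (q - 1)) * s powr (q - 1)"
    using eta_pos s by (simp add: v powr_mult mult_ac)
  also have "\<dots> = \<eta> / (2*(1 - q)) * s powr (q - 1)" by (simp only: lam_mu_eta_powr)
  finally have "lam*\<mu> * v powr (q - 1) = \<eta> / (2*(1 - q)) * s powr (q - 1)" .
  moreover have "1 + (q - 1) * (s - 1) \<le> s powr (q - 1)"
    using powr_neg_exp_ge_tangent[OF s] q_less_1 by simp
  ultimately have "\<eta> / (2*(1 - q)) * (1 + (q - 1) * (s - 1)) \<le> lam*\<mu> * v powr (q - 1)"
    using eta_pos q_less_1 mult_left_mono[of _ _ "\<eta> / (2*(1 - q))"] by simp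
  moreover have "\<eta> / (2*(1 - q)) * (1 + (q - 1) * (s - 1)) = \<tau> - v/2"
    using q_less_1 by (simp add: v tau_eq field_simps)
  ultimately show ?thesis by (simp add: \<theta>_def)
qed

lemma prox_obj_diff_zero:
  assumes "v > 0" shows "P z v - P z 0 = v/\<mu> * (\<theta> v - z)"
proof -
  have "v powr q = v powr (q - 1) * v" using assms by (simp add: powr_diff)
  thus ?thesis using assms mu_pos by (simp add: prox_obj_def \<theta>_def field_simps power2_eq_square)
qed

lemma prox_obj_minus: "P (-z) (-v) = P z v"
  by (simp add: prox_obj_def power2_eq_square algebra_simps)

lemma prox_q_minus: "-v \<in> prox_q \<mu> lam q (-z) \<longleftrightarrow> v \<in> prox_q \<mu> lam q z"
  unfolding mem_prox_q_iff by (metis prox_obj_minus minus_minus)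

lemma prox_obj_abs_le:
  assumes "z \<ge> 0" shows "P z \<bar>v\<bar> \<le> P z v"
proof -
  have "v * z \<le> \<bar>v\<bar> * z" using assms by (simp add: mult_right_mono)
  then have "(z - \<bar>v\<bar>)^2 \<le> (z - v)^2" by (simp add: power2_eq_square algebra_simps)
  thus ?thesis using mu_pos by (simp add: prox_obj_def divide_right_mono)
qed

lemma prox_obj_neg_less:
  assumes "z > 0" "v < 0" shows "P z (-v) < P z v"
proof -
  have "(z + v)^2 < (z - v)^2"
    using assms mult_neg_pos[of v z] by (simp add: power2_eq_square algebra_simps)
  thus ?thesis using mu_pos by (simp add: prox_obj_def divide_strict_right_mono)
qed

lemma prox_q_nonempty: "\<exists>v. v \<in> prox_q \<mu> lam q z"
proof -
  define R where "R = 2*\<bar>z\<bar>"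
  have "continuous_on {-R..R} (P z)"
    unfolding prox_obj_def using mu_pos q_pos
    by (intro continuous_intros continuous_on_powr') auto
  then obtain v where v: "v \<in> {-R..R}" "\<And>u. u \<in> {-R..R} \<Longrightarrow> P z v \<le> P z u"
    using continuous_attains_inf[of "{-R..R}" "P z"] by (auto simp: R_def)
  have "P z v \<le> P z u" for u
  proof (cases "u \<in> {-R..R}")
    case False
    then have "z^2 \<le> (z - u)^2"
      by (auto simp: R_def abs_le_square_iff[symmetric])
    then have "P z 0 \<le> P z u"
      using mu_pos lam_pos by (simp add: prox_obj_def divide_right_mono add_increasing2)
    with v(2)[of 0] show ?thesis by (simp add: R_def)
  qed (use v in blast)
  then show ?thesis by (auto simp: mem_prox_q_iff)
qed

lemma prox_q_below_tau:
  assumes "0 \<le> z" "z < \<tau>" shows "prox_q \<mu> lam q z = {0}"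
proof -
  have "P z 0 < P z u" if "u \<noteq> 0" for u
  proof -
    have "\<bar>u\<bar> > 0" using that by simp
    then have "0 < \<bar>u\<bar>/\<mu> * (\<theta> \<bar>u\<bar> - z)"
      using tau_le_theta[of "\<bar>u\<bar>"] assms mu_pos by simp
    then have "P z 0 < P z \<bar>u\<bar>"
      using prox_obj_diff_zero[of "\<bar>u\<bar>" z] \<open>\<bar>u\<bar> > 0\<close> by linarith
    then show ?thesis using prox_obj_abs_le[OF assms(1), of u] by linarith
  qed
  then show ?thesis
    unfolding set_eq_iff mem_prox_q_iff singleton_iff by (metis order.strict_iff_not order_refl)
qed

lemma prox_q_at_tau: "0 \<in> prox_q \<mu> lam q \<tau>" "\<eta> \<in> prox_q \<mu> lam q \<tau>"
proof -
  have zero_min: "P \<tau> 0 \<le> P \<tau> u" for u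
  proof (cases "u = 0")
    case False
    then have "0 \<le> \<bar>u\<bar>/\<mu> * (\<theta> \<bar>u\<bar> - \<tau>)"
      using tau_le_theta[of "\<bar>u\<bar>"] mu_pos by simp
    then have "P \<tau> 0 \<le> P \<tau> \<bar>u\<bar>"
      using prox_obj_diff_zero[of "\<bar>u\<bar>" \<tau>] \<open>u \<noteq> 0\<close> by simp
    with prox_obj_abs_le[of \<tau> u] tau_pos show ?thesis by linarith
  qed simp
  moreover have "P \<tau> \<eta> = P \<tau> 0"
    using prox_obj_diff_zero[OF eta_pos, of \<tau>] by (simp add: theta_eta)
  ultimately show "0 \<in> prox_q \<mu> lam q \<tau>" "\<eta> \<in> prox_q \<mu> lam q \<tau>"
    unfolding mem_prox_q_iff by auto
qed

lemma prox_q_above_tau_pos: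
  assumes "\<tau> < z" "v \<in> prox_q \<mu> lam q z" shows "v > 0"
proof -
  have min: "P z v \<le> P z u" for u using assms(2) mem_prox_q_iff by blast
  have "\<eta>/\<mu> * (\<theta> \<eta> - z) < 0"
    using eta_pos mu_pos assms(1) mult_pos_neg[of \<eta> "\<tau> - z"] by (simp add: theta_eta divide_neg_pos)
  then have "P z \<eta> < P z 0"
    using prox_obj_diff_zero[OF eta_pos, of z] by linarith
  with min[of \<eta>] have "v \<noteq> 0" by auto
  moreover have "\<not> v < 0"
    using min[of "-v"] prox_obj_neg_less[of z v] assms(1) tau_pos by auto
  ultimately show ?thesis by linarith
qed

definition P' :: "real \<Rightarrow> real \<Rightarrow> real" where
  "P' z v = (v - z)/\<mu> + lam*q * v powr (q - 1)"

definition P'' :: "real \<Rightarrow> real" where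
  "P'' v = 1/\<mu> + lam*q*(q - 1) * v powr (q - 2)"

lemma prox_obj_has_derivative:
  assumes "v > 0" shows "(P z has_real_derivative P' z v) (at v)"
proof -
  have "((\<lambda>v. (z - v)*(z - v)/(2*\<mu>) + lam * v powr q) has_real_derivative
      ((0 - 1)*(z - v) + (0 - 1)*(z - v))/(2*\<mu>) + lam * (q * v powr (q - 1))) (at v)"
    by (intro DERIV_add DERIV_cmult has_real_derivative_powr assms DERIV_cdivide DERIV_mult
        DERIV_diff DERIV_const DERIV_ident)
  moreover have "((0 - 1)*(z - v) + (0 - 1)*(z - v))/(2*\<mu>) + lam * (q * v powr (q - 1)) = P' z v"
    using mu_pos by (simp add: P'_def field_simps)
  ultimately have "((\<lambda>v. (z - v)^2/(2*\<mu>) + lam * v powr q) has_real_derivative P' z v) (at v)"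
    by (simp add: power2_eq_square)
  then show ?thesis
    by (rule has_field_derivative_transform_within_open[of _ _ _ "{0<..}"])
      (use assms in \<open>auto simp: prox_obj_def\<close>)
qed

lemma P'_has_derivative:
  assumes "v > 0" shows "(P' z has_real_derivative P'' v) (at v)"
proof -
  have "((\<lambda>v. (v - z)/\<mu> + lam*q * v powr (q - 1)) has_real_derivative
      (1 - 0)/\<mu> + lam*q * ((q - 1) * v powr (q - 1 - 1))) (at v)"
    by (intro DERIV_add DERIV_cmult has_real_derivative_powr assms DERIV_cdivide DERIV_diff
        DERIV_const DERIV_ident)
  then show ?thesis by (simp add: P'_def[abs_def] P''_def mult.assoc)
qed

lemma P''_strict_mono: "0 < a \<Longrightarrow> a < b \<Longrightarrow> P'' a < P'' b"
  using lam_pos q_pos q_less_1 powr_less_mono2_neg[of "q - 2" a b]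
  by (simp add: P''_def mult_less_cancel_left_neg)

text \<open>Two positive minimizers \<open>a < b\<close> would give three zeros \<open>a < c < b\<close> of \<open>P' z\<close>, hence
  two zeros of the strictly increasing \<open>P''\<close>.\<close>
lemma prox_q_pos_unique:
  assumes "0 < a" "a \<in> prox_q \<mu> lam q z" "0 < b" "b \<in> prox_q \<mu> lam q z"
  shows "a = b"
proof (rule ccontr)
  assume "a \<noteq> b"
  then obtain a b where ab: "0 < a" "a < b" and mins: "\<And>u. P z a \<le> P z u" "\<And>u. P z b \<le> P z u"
    using assms unfolding mem_prox_q_iff by (metis linorder_neqE_linordered_idom)
  have stationary: "P' z v = 0" if "0 < v" "\<And>u. P z v \<le> P z u" for v
    by (rule DERIV_local_min[OF prox_obj_has_derivative[OF that(1)] zero_less_one]) (use that in blast)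
  have derivs: "(P z has_real_derivative P' z v) (at v)" "(P' z has_real_derivative P'' v) (at v)"
    if "a \<le> v" for v
    using prox_obj_has_derivative P'_has_derivative that ab(1) by auto
  obtain c where c: "a < c" "c < b" "P z b - P z a = (b - a) * P' z c"
    using MVT2[OF ab(2) derivs(1)] by blast
  have "P z a = P z b" using mins by (meson order_antisym)
  with c ab have "P' z c = 0" by simp
  moreover have "P' z a = 0" "P' z b = 0" using stationary ab mins by auto
  moreover obtain d1 where "a < d1" "d1 < c" "P' z c - P' z a = (c - a) * P'' d1"
    using MVT2[OF c(1) derivs(2)] by blast
  moreover obtain d2 where "c < d2" "d2 < b" "P' z b - P' z c = (b - c) * P'' d2"
    using MVT2[OF c(2) derivs(2)] c(1) by force
  ultimately show False using P''_strict_mono[of d1 d2] ab by simp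
qed

lemma prox_q_unique:
  assumes "\<bar>z\<bar> \<noteq> \<tau>" shows "\<exists>!v. v \<in> prox_q \<mu> lam q z"
proof -
  have nonneg: "\<exists>!v. v \<in> prox_q \<mu> lam q z" if "z \<ge> 0" "z \<noteq> \<tau>" for z
  proof (cases "z < \<tau>")
    case True
    then show ?thesis using prox_q_below_tau[OF that(1)] by auto
  next
    case False
    then have "\<tau> < z" using that by simp
    then show ?thesis
      using prox_q_nonempty prox_q_above_tau_pos prox_q_pos_unique by metis
  qed
  show ?thesis
  proof (cases "z \<ge> 0")
    case True then show ?thesis using nonneg assms by simp
  next
    case False
    then have "\<exists>!v. v \<in> prox_q \<mu> lam q (-z)" using nonneg assms by simp
    then show ?thesis using prox_q_minus by (metis minus_minus)
  qed
qed

lemma Tmap_in_prox_q: "Tmap \<mu> lam q z w \<in> prox_q \<mu> lam q z"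
proof (cases "\<bar>z\<bar> = \<tau>")
  case False
  then show ?thesis using theI'[OF prox_q_unique[OF False]] by (simp add: Tmap_def)
next
  case True
  then consider "z = \<tau>" | "z = -\<tau>" by linarith
  then have "0 \<in> prox_q \<mu> lam q z \<and> sgn z * \<eta> \<in> prox_q \<mu> lam q z"
    using prox_q_at_tau prox_q_minus[of 0 \<tau>] prox_q_minus[of \<eta> \<tau>] tau_pos
    by cases auto
  with True show ?thesis by (simp add: Tmap_def)
qed

end

lemma sum_fun_upd_eq:
  fixes g :: "'a \<Rightarrow> 'b \<Rightarrow> 'c::ab_group_add"
  assumes "finite A" "i \<in> A"
  shows "(\<Sum>j\<in>A. g j ((x(i := v)) j)) = (\<Sum>j\<in>A. g j (x j)) + (g i v - g i (x i))"
proof -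
  have "(\<Sum>j\<in>A - {i}. g j ((x(i := v)) j)) = (\<Sum>j\<in>A - {i}. g j (x j))"
    by (rule sum.cong) auto
  thus ?thesis using sum.remove[OF assms, of "\<lambda>j. g j ((x(i := v)) j)"]
      sum.remove[OF assms, of "\<lambda>j. g j (x j)"] by simp
qed

definition lq_objective :: "nat \<Rightarrow> nat \<Rightarrow> (nat \<Rightarrow> nat \<Rightarrow> real) \<Rightarrow> (nat \<Rightarrow> real) \<Rightarrow> real \<Rightarrow> real
    \<Rightarrow> (nat \<Rightarrow> real) \<Rightarrow> real" where
  "lq_objective m N A y lam q x = (\<Sum>k<m. (resid m N A y x k)^2) / 2 + lam * (\<Sum>j<N. \<bar>x j\<bar> powr q)"

lemma lq_objective_nonneg: "lam \<ge> 0 \<Longrightarrow> lq_objective m N A y lam q x \<ge> 0"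
  unfolding lq_objective_def
  by (intro add_nonneg_nonneg mult_nonneg_nonneg sum_nonneg divide_nonneg_pos) auto

lemma resid_fun_upd:
  assumes "i < N"
  shows "resid m N A y (x(i := v)) k = resid m N A y x k + A k i * (v - x i)"
  using sum_fun_upd_eq[of "{..<N}" i "\<lambda>j t. A k j * t" x v] assms
  by (simp add: resid_def algebra_simps)

lemma lq_objective_fun_upd:
  assumes "i < N"
  shows "lq_objective m N A y lam q (x(i := v)) = lq_objective m N A y lam q x
     + (v - x i) * grad_i m N A y x i + col_norm2 m A i * (v - x i)^2 / 2
     + lam * (\<bar>v\<bar> powr q - \<bar>x i\<bar> powr q)"
proof -
  let ?r = "resid m N A y x" and ?t = "v - x i"
  have "(\<Sum>k<m. (resid m N A y (x(i := v)) k)^2)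
      = (\<Sum>k<m. (?r k)^2 + 2 * ?t * (A k i * ?r k) + ?t^2 * (A k i)^2)"
    by (intro sum.cong refl) (simp add: resid_fun_upd[OF assms] power2_eq_square algebra_simps)
  also have "\<dots> = (\<Sum>k<m. (?r k)^2) + 2 * ?t * grad_i m N A y x i + ?t^2 * col_norm2 m A i"
    by (simp add: sum.distrib grad_i_def col_norm2_def sum_distrib_left)
  finally have squares: "(\<Sum>k<m. (resid m N A y (x(i := v)) k)^2)
      = (\<Sum>k<m. (?r k)^2) + 2 * ?t * grad_i m N A y x i + ?t^2 * col_norm2 m A i" .
  have powers: "(\<Sum>j<N. \<bar>(x(i := v)) j\<bar> powr q)
      = (\<Sum>j<N. \<bar>x j\<bar> powr q) + (\<bar>v\<bar> powr q - \<bar>x i\<bar> powr q)"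
    using sum_fun_upd_eq[of "{..<N}" i "\<lambda>_ t. \<bar>t\<bar> powr q" x v] assms by simp
  show ?thesis
    unfolding lq_objective_def squares powers by (simp add: field_simps)
qed

lemma lq_objective_prox_update:
  assumes "i < N" "\<mu> > 0"
    and "v \<in> prox_q \<mu> lam q (x i - \<mu> * grad_i m N A y x i)"
  shows "lq_objective m N A y lam q (x(i := v)) + (1/(2*\<mu>) - col_norm2 m A i / 2) * (v - x i)^2
    \<le> lq_objective m N A y lam q x"
proof -
  let ?g = "grad_i m N A y x i"
  let ?z = "x i - \<mu> * ?g"
  have "prox_obj \<mu> lam q ?z v \<le> prox_obj \<mu> lam q ?z (x i)"
    using assms(3) mem_prox_q_iff by blast
  moreover have "(?z - v)^2/(2*\<mu>) - (?z - x i)^2/(2*\<mu>) = (v - x i)^2/(2*\<mu>) + ?g * (v - x i)"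
    using assms(2) by (simp add: field_simps power2_eq_square)
  ultimately have "(v - x i)^2/(2*\<mu>) + ?g * (v - x i) + lam * (\<bar>v\<bar> powr q - \<bar>x i\<bar> powr q) \<le> 0"
    unfolding prox_obj_def by (simp add: algebra_simps)
  then show ?thesis by (simp add: lq_objective_fun_upd[OF assms(1)] algebra_simps)
qed

lemma summable_of_decrease:
  fixes f c :: "nat \<Rightarrow> real"
  assumes decrease: "\<And>n. f (Suc n) + c n \<le> f n"
    and bounded: "\<And>n. b \<le> f n" and nonneg: "\<And>n. 0 \<le> c n"
  shows "summable c"
proof (rule summableI_nonneg_bounded)
  have partial_sums: "f n + (\<Sum>l<n. c l) \<le> f 0" for n
    by (induction n) (use decrease in \<open>auto intro: order_trans[rotated]\<close>)
  show "(\<Sum>l<n. c l) \<le> f 0 - b" for n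
    using partial_sums[of n] bounded[of n] by linarith
qed (use nonneg in auto)

lemma tendsto_bounded_shift:
  fixes f :: "nat \<Rightarrow> 'a::real_normed_vector"
  assumes increments: "(\<lambda>n. f (Suc n) - f n) \<longlonglongrightarrow> 0"
    and r: "strict_mono r" and lim: "(\<lambda>k. f (r k)) \<longlonglongrightarrow> L"
    and shift: "\<And>k. s k \<le> K"
  shows "(\<lambda>k. f (r k + s k)) \<longlonglongrightarrow> L"
proof -
  define E where "E n = (\<Sum>l<K. norm (f (Suc (n + l)) - f (n + l)))" for n
  have drift: "norm (f (n + p) - f n) \<le> (\<Sum>l<p. norm (f (Suc (n + l)) - f (n + l)))" for n p
  proof (induction p)
    case (Suc p)
    have "norm (f (n + Suc p) - f n) \<le> norm (f (Suc (n + p)) - f (n + p)) + norm (f (n + p) - f n)"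
      using norm_triangle_ineq[of "f (Suc (n + p)) - f (n + p)" "f (n + p) - f n"] by simp
    with Suc show ?case by simp
  qed simp
  have "(\<lambda>n. norm (f (Suc (n + l)) - f (n + l))) \<longlonglongrightarrow> 0" for l
    using LIMSEQ_ignore_initial_segment[OF tendsto_norm_zero[OF increments], of l] by simp
  then have "E \<longlonglongrightarrow> 0"
    unfolding E_def by (intro tendsto_null_sum) auto
  then have E_subseq: "(\<lambda>k. E (r k)) \<longlonglongrightarrow> 0"
    using LIMSEQ_subseq_LIMSEQ[OF _ r] by (simp add: o_def)
  have "norm (f (r k + s k) - f (r k)) \<le> E (r k)" for k
    using drift[of "r k" "s k"] shift[of k] unfolding E_def
    by (meson finite_lessThan lessThan_subset_iff norm_ge_zero order_trans sum_mono2)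
  then have "(\<lambda>k. f (r k + s k) - f (r k)) \<longlonglongrightarrow> 0"
    by (intro Lim_null_comparison[OF always_eventually E_subseq] allI)
  from tendsto_add[OF this lim] show ?thesis by simp
qed

lemma add_shift_mod_eq:
  assumes "i < (N::nat)" shows "(n + (i + N - n mod N) mod N) mod N = i"
proof -
  have "(n + (i + N - n mod N) mod N) mod N = (n mod N + (i + N - n mod N)) mod N"
    by (simp add: mod_add_left_eq mod_add_right_eq)
  also have "n mod N + (i + N - n mod N) = i + N"
    using mod_less_divisor[of N n] assms by linarith
  finally show ?thesis using assms by simp
qed

lemma gaita_Suc_eq_fun_upd:
  "gaita m N A y lam q \<mu> x0 (Suc n) = (gaita m N A y lam q \<mu> x0 n)(n mod N :=
     gaita m N A y lam q \<mu> x0 (Suc n) (n mod N))"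
  by (simp add: gaita_step_def Let_def)

locale gaita_setting = lq_prox +
  fixes m N :: nat and A :: "nat \<Rightarrow> nat \<Rightarrow> real" and y x0 :: "nat \<Rightarrow> real"
  assumes N_pos: "0 < N" and mu_less: "\<mu> < 1 / Lmax m N A"
begin

abbreviation "X \<equiv> gaita m N A y lam q \<mu> x0"
abbreviation "F \<equiv> lq_objective m N A y lam q"

lemma gaita_update_in_prox_q:
  "X (Suc n) (n mod N) \<in> prox_q \<mu> lam q (X n (n mod N) - \<mu> * grad_i m N A y (X n) (n mod N))"
  by (simp add: gaita_step_def Let_def Tmap_in_prox_q)

definition descent_const :: real where
  "descent_const = 1/(2*\<mu>) - Lmax m N A / 2"

lemma descent_const_pos: "descent_const > 0"
proof -
  have "0 < 1 / Lmax m N A" using mu_pos mu_less by linarith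
  then have "Lmax m N A > 0" by simp
  with mu_pos mu_less show ?thesis by (simp add: descent_const_def field_simps)
qed

lemma gaita_sufficient_decrease:
  "F (X (Suc n)) + descent_const * (X (Suc n) (n mod N) - X n (n mod N))^2 \<le> F (X n)"
proof -
  have "col_norm2 m A (n mod N) \<le> Lmax m N A"
    unfolding Lmax_def using N_pos by (intro Max_ge) auto
  then have "descent_const * (X (Suc n) (n mod N) - X n (n mod N))^2
      \<le> (1/(2*\<mu>) - col_norm2 m A (n mod N) / 2) * (X (Suc n) (n mod N) - X n (n mod N))^2"
    by (intro mult_right_mono) (auto simp: descent_const_def)
  moreover have "F (X (Suc n)) + (1/(2*\<mu>) - col_norm2 m A (n mod N) / 2)
      * (X (Suc n) (n mod N) - X n (n mod N))^2 \<le> F (X n)"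
    using lq_objective_prox_update[OF _ mu_pos gaita_update_in_prox_q] N_pos
    by (subst (1 2) gaita_Suc_eq_fun_upd) simp
  ultimately show ?thesis by linarith
qed

lemma gaita_increments_tendsto_zero: "(\<lambda>n. X (Suc n) j - X n j) \<longlonglongrightarrow> 0"
proof -
  define d where "d n = X (Suc n) (n mod N) - X n (n mod N)" for n
  have "summable (\<lambda>n. descent_const * (d n)^2)"
  proof (rule summable_of_decrease)
    show "F (X (Suc n)) + descent_const * (d n)^2 \<le> F (X n)" for n
      unfolding d_def by (rule gaita_sufficient_decrease)
    show "0 \<le> F (X n)" for n
      by (rule lq_objective_nonneg) (use lam_pos in simp)
    show "0 \<le> descent_const * (d n)^2" for n
      using descent_const_pos by simp
  qed
  then have "(\<lambda>n. (d n)^2) \<longlonglongrightarrow> 0"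
    using summable_mult_D descent_const_pos summable_LIMSEQ_zero by fastforce
  then have "(\<lambda>n. sqrt ((d n)^2)) \<longlonglongrightarrow> sqrt 0" by (rule tendsto_real_sqrt)
  then have d_lim: "(\<lambda>n. \<bar>d n\<bar>) \<longlonglongrightarrow> 0" by simp
  have "\<bar>X (Suc n) j - X n j\<bar> \<le> \<bar>d n\<bar>" for n
  proof (cases "j = n mod N")
    case False
    then have "X (Suc n) j = X n j"
      by (subst gaita_Suc_eq_fun_upd) simp
    then show ?thesis by simp
  qed (simp add: d_def)
  then show ?thesis
    by (intro Lim_null_comparison[OF always_eventually d_lim] allI) simp
qed

lemma limit_point_in_prox_q:
  assumes r: "strict_mono r" and lim: "\<And>j. j < N \<Longrightarrow> (\<lambda>k. X (r k) j) \<longlonglongrightarrow> x j"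
    and i: "i < N"
  shows "x i \<in> prox_q \<mu> lam q (x i - \<mu> * grad_i m N A y x i)"
proof -
  define p where "p k = (i + N - r k mod N) mod N" for k
  define n where "n k = r k + p k" for k
  have p_less: "p k < N" for k using i by (simp add: p_def)
  have n_mod: "n k mod N = i" for k using add_shift_mod_eq[OF i] by (simp add: n_def p_def)
  have before: "(\<lambda>k. X (n k) j) \<longlonglongrightarrow> x j" if "j < N" for j
    unfolding n_def
    by (rule tendsto_bounded_shift[OF gaita_increments_tendsto_zero r lim[OF that]])
      (rule less_imp_le[OF p_less])
  have "(\<lambda>k. X (r k + Suc (p k)) i) \<longlonglongrightarrow> x i"
    by (rule tendsto_bounded_shift[OF gaita_increments_tendsto_zero r lim[OF i]])
      (rule Suc_leI[OF p_less])
  then have after: "(\<lambda>k. X (Suc (n k)) i) \<longlonglongrightarrow> x i"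
    by (simp only: n_def add_Suc_right)
  have "(\<lambda>k. X (n k) i - \<mu> * grad_i m N A y (X (n k)) i) \<longlonglongrightarrow> x i - \<mu> * grad_i m N A y x i"
    unfolding grad_i_def resid_def by (intro tendsto_intros before i) simp
  moreover have "X (Suc (n k)) i \<in> prox_q \<mu> lam q (X (n k) i - \<mu> * grad_i m N A y (X (n k)) i)" for k
    using gaita_update_in_prox_q[of "n k"] unfolding n_mod .
  ultimately show ?thesis
    using prox_q_closed_graph[OF _ after _ q_pos] mu_pos by simp
qed

end

theorem theorem2:
  fixes m N :: nat and A :: "nat \<Rightarrow> nat \<Rightarrow> real" and y x0 :: "nat \<Rightarrow> real"
    and lam q \<mu> :: real
  assumes "N \<ge> 1"
    and "lam > 0" and "0 < q" and "q < 1"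
    and "0 < \<mu>" and "\<mu> < 1 / Lmax m N A"
  shows "limit_points N (gaita m N A y lam q \<mu> x0) \<subseteq> fixed_set m N A y lam q \<mu>"
proof
  interpret gaita_setting \<mu> lam q m N A y x0
    using assms by unfold_locales auto
  fix x assume "x \<in> limit_points N X"
  then obtain r where "strict_mono r" "\<And>j. j < N \<Longrightarrow> (\<lambda>k. X (r k) j) \<longlonglongrightarrow> x j"
    unfolding limit_points_def by blast
  then show "x \<in> fixed_set m N A y lam q \<mu>"
    unfolding fixed_set_def using limit_point_in_prox_q by blast
qed

end
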